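(* Suppose the setting below holds with step sizes $\gamma_k = A/k^{\alpha}$ for all $k\ge 1$, where $\alpha\in(0,1]$ and $A>0$ with $\gamma_k\in(0,1]$ for all $k$. Then for every agent $i\in[m]$, $\|x_i^k-\bar x^k\| = \mathcal{O}(1/k^{\alpha})$ as $k\to\infty$.
   Context: Setting. Problem: minimize $F(x)=\frac1m\sum_{i=1}^m f_i(x)$ over $x\in\Omega\subset\mathbb{R}^d$, where $f_i(x)=\frac1{n_i}\sum_{j=1}^{n_i} f_{i,j}(x)$; agent $i$ only knows $f_i$. Assumption 1: $\Omega$ is nonempty, convex and compact with diameter $\bar\rho=\max_{x,\hat x\in\Omega}\|x-\hat x\|$. Standing regularity: each $f_{i,j}$ is differentiable and $L$-smooth (gradient $L$-Lipschitz) on a neighborhood of $\Omega$, each $f_i$ is $G$-Lipschitz on $\Omega$, and $\|\nabla f_i(x)\|\le C$ for all $x\in\Omega$. Assumption 2: the $m$ agents communicate over a connected undirected graph; $W\in\mathbb{R}^{m\times m}$ is symmetric, has nonnegative entries, $W_{ij}=0$ unless $i=j$ or $\{i,j\}$ is an edge, and is doubly stochastic ($W\mathbf 1=W^\top\mathbf 1=\mathbf 1$); moreover $\lambda_2(W)$, the largest modulus of the eigenvalues of $W$ other than the simple eigenvalue $1$ (equivalently $\|W-\frac1m\mathbf 1\mathbf 1^\top\|_2$), satisfies $|\lambda_2(W)|<1$. Algorithm DstoFW with step sizes $\gamma_k\in(0,1]$, epoch length $q\in\mathbb{Z}^+$ and sample sizes $|S^k|$: initialize $x_i^1\in\Omega$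 and $d_i^1=v_i^1=g_i^1=\nabla f_i(x_i^1)$. For $k=1,2,\dots$ each agent $i$ computes: $\overline{x_i^k}=\sum_{j=1}^m W_{ij}x_j^k$; $u_i^k\in\arg\min_{u\in\Omega}\langle u,d_i^k\rangle$; $x_i^{k+1}=(1-\gamma_k)\overline{x_i^k}+\gamma_k u_i^k$; if $(k+1)\bmod q=0$ then $v_i^{k+1}=\frac1{n_i}\sum_{j=1}^{n_i}\nabla f_{i,j}(x_i^{k+1})$, otherwise a sample set $S^k$ of indices from $[n_i]$ is drawn uniformly at random (independently of the past) and $v_i^{k+1}=\frac1{|S^k|}\sum_{j\in S^k}[\nabla f_{i,j}(x_i^{k+1})-\nabla f_{i,j}(x_i^k)]+v_i^k$; then $g_i^{k+1}=d_i^k+v_i^{k+1}-v_i^k$ and $d_i^{k+1}=\sum_{j=1}^m W_{ij}g_j^{k+1}$. Notation: $\bar x^k=\frac1m\sum_i x_i^k$. *)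

theory Defs
  imports "HOL-Analysis.Analysis" "HOL-Library.Landau_Symbols"
begin

text \<open>Agents are indexed by a finite type 'm (so m = CARD('m)); the decision
  space is an abstract Euclidean space 'a (R^d).  Local component functions of
  agent i are f i j for j < n i, with gradients gradf i j.\<close>

definition mean_agents :: "('m::finite \<Rightarrow> 'a::real_vector) \<Rightarrow> 'a" where
  "mean_agents z = (1 / real CARD('m)) *\<^sub>R (\<Sum>i\<in>UNIV. z i)"

definition local_fun :: "nat \<Rightarrow> (nat \<Rightarrow> 'a \<Rightarrow> real) \<Rightarrow> 'a \<Rightarrow> real" where
  "local_fun ni fi x = (\<Sum>j<ni. fi j x) / real ni"

definition local_grad :: "nat \<Rightarrow> (nat \<Rightarrow> 'a \<Rightarrow> 'a::real_vector) \<Rightarrow> 'a \<Rightarrow> 'a" where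
  "local_grad ni gi x = (1 / real ni) *\<^sub>R (\<Sum>j<ni. gi j x)"

text \<open>Assumption 2: W is a symmetric, nonnegative, doubly stochastic matrix
  supported on a connected undirected graph E, with
  lambda_2(W) = norm_2 (W - (1/m) 1 1^T) < 1.\<close>
definition mixing_matrix :: "('m::finite \<Rightarrow> 'm \<Rightarrow> bool) \<Rightarrow> ('m \<Rightarrow> 'm \<Rightarrow> real) \<Rightarrow> bool" where
  "mixing_matrix E W \<longleftrightarrow>
     (\<forall>i j. E i j \<longrightarrow> E j i) \<and>
     (\<forall>i j. E\<^sup>*\<^sup>* i j) \<and>
     (\<forall>i j. W i j = W j i) \<and>
     (\<forall>i j. 0 \<le> W i j) \<and>
     (\<forall>i j. W i j \<noteq> 0 \<longrightarrow> i = j \<or> E i j) \<and>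
     (\<forall>i. (\<Sum>j\<in>UNIV. W i j) = 1) \<and>
     (\<forall>j. (\<Sum>i\<in>UNIV. W i j) = 1) \<and>
     onorm (\<lambda>z::real^'m. \<chi> i. \<Sum>j\<in>UNIV. (W i j - 1 / real CARD('m)) * z $ j) < 1"

text \<open>One sample path of DstoFW (iterations indexed k = 1, 2, ...).  The random
  sample sets are represented by an arbitrary realization S k i \<subseteq> [n_i]
  (nonempty); the theorem is claimed for every realization.\<close>
definition dstofw_run ::
  "('m::finite \<Rightarrow> 'm \<Rightarrow> real) \<Rightarrow> 'a::euclidean_space set \<Rightarrow> ('m \<Rightarrow> nat) \<Rightarrow>
   ('m \<Rightarrow> nat \<Rightarrow> 'a \<Rightarrow> 'a) \<Rightarrow> (nat \<Rightarrow> real) \<Rightarrow> nat \<Rightarrow> (nat \<Rightarrow> 'm \<Rightarrow> nat set) \<Rightarrow>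
   (nat \<Rightarrow> 'm \<Rightarrow> 'a) \<Rightarrow> (nat \<Rightarrow> 'm \<Rightarrow> 'a) \<Rightarrow> (nat \<Rightarrow> 'm \<Rightarrow> 'a) \<Rightarrow>
   (nat \<Rightarrow> 'm \<Rightarrow> 'a) \<Rightarrow> (nat \<Rightarrow> 'm \<Rightarrow> 'a) \<Rightarrow> bool" where
  "dstofw_run W \<Omega> n gradf \<gamma> q S x u d v g \<longleftrightarrow>
     (\<forall>i. x 1 i \<in> \<Omega>) \<and>
     (\<forall>i. d 1 i = local_grad (n i) (gradf i) (x 1 i) \<and>
          v 1 i = local_grad (n i) (gradf i) (x 1 i) \<and>
          g 1 i = local_grad (n i) (gradf i) (x 1 i)) \<and>
     (\<forall>k\<ge>1. \<forall>i.
        u k i \<in> \<Omega> \<and> (\<forall>w\<in>\<Omega>. u k i \<bullet> d k i \<le> w \<bullet> d k i) \<and>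
        x (k+1) i = (1 - \<gamma> k) *\<^sub>R (\<Sum>j\<in>UNIV. W i j *\<^sub>R x k j) + \<gamma> k *\<^sub>R u k i \<and>
        (if (k+1) mod q = 0
         then v (k+1) i = local_grad (n i) (gradf i) (x (k+1) i)
         else S k i \<subseteq> {..<n i} \<and> S k i \<noteq> {} \<and>
              v (k+1) i = (1 / real (card (S k i))) *\<^sub>R
                 (\<Sum>j\<in>S k i. gradf i j (x (k+1) i) - gradf i j (x k i)) + v k i) \<and>
        g (k+1) i = d k i + v (k+1) i - v k i \<and>
        d (k+1) i = (\<Sum>j\<in>UNIV. W i j *\<^sub>R g (k+1) j))"

end

theory Submission
  imports Defs
begin

text \<open>Stack the deviations of the agents from their average into the consensus error
  e_k = (x_i^k - xbar^k)_i.  Since W is doubly stochastic, averaging commutes with the mixing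
  step, so e_{k+1} = (1 - gamma_k) (W - J) e_k + gamma_k (u_i^k - ubar^k)_i with J = (1/m) 1 1^T.
  The first term contracts by the factor lambda_2(W) < 1 and the second is at most
  gamma_k 2 m R because all u_i^k lie in the compact set Omega, of norm at most R.  A
  nonnegative sequence with a_{k+1} <= lambda a_k + B A/k^alpha is O(1/k^alpha): once
  k >= 2/(1 - lambda), the bound c/k^alpha propagates from k to k+1 because
  (1 + 1/k)^alpha <= 1 + 1/k.\<close>

definition consensus_error :: "('m::finite \<Rightarrow> 'a::real_vector) \<Rightarrow> 'a ^ 'm" where
  "consensus_error z = (\<chi> i. z i - mean_agents z)"

lemma norm_vec_le_sum_norm:
  fixes y :: "'a::real_normed_vector ^ 'm::finite"
  shows "norm y \<le> (\<Sum>i\<in>UNIV. norm (y $ i))"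
  unfolding norm_vec_def by (rule L2_set_le_sum) simp

lemma bounded_linear_matrix_action:
  "bounded_linear (\<lambda>z::real ^ 'm::finite. \<chi> i. \<Sum>j\<in>UNIV. M i j * z $ j)"
proof -
  have "linear (\<lambda>z::real ^ 'm. \<chi> i. \<Sum>j\<in>UNIV. M i j * z $ j)"
    by (rule linearI) (auto simp: vec_eq_iff algebra_simps sum.distrib sum_distrib_left)
  then show ?thesis by (simp add: linear_conv_bounded_linear)
qed

text \<open>The matrix acts separately on each Basis coordinate of 'a, and the squared norms
  add up over these coordinates.\<close>

lemma norm_blockwise_matrix_action_le:
  fixes e :: "'a::euclidean_space ^ 'm::finite" and M :: "'m \<Rightarrow> 'm \<Rightarrow> real"
  shows "norm (\<chi> i. \<Sum>j\<in>UNIV. M i j *\<^sub>R e $ j)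
    \<le> onorm (\<lambda>z::real ^ 'm. \<chi> i. \<Sum>j\<in>UNIV. M i j * z $ j) * norm e"
proof -
  define Mop where "Mop = (\<lambda>z::real ^ 'm. \<chi> i. \<Sum>j\<in>UNIV. M i j * z $ j)"
  define lam where "lam = onorm Mop"
  have bl: "bounded_linear Mop"
    unfolding Mop_def by (rule bounded_linear_matrix_action)
  have lam_nonneg: "0 \<le> lam"
    unfolding lam_def by (rule onorm_pos_le[OF bl])
  define z where "z b = (\<chi> j. e $ j \<bullet> b)" for b :: 'a
  have vec_norm_sq: "(norm y)\<^sup>2 = (\<Sum>i\<in>UNIV. (norm (y $ i))\<^sup>2)" for y :: "'b::real_normed_vector ^ 'm"
    by (simp add: norm_vec_def L2_set_def sum_nonneg)
  have eucl_norm_sq: "(norm w)\<^sup>2 = (\<Sum>b\<in>Basis. (w \<bullet> b)\<^sup>2)" for w :: 'a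
    unfolding power2_norm_eq_inner euclidean_inner[of w w] by (simp add: power2_eq_square)
  have Mop_z: "Mop (z b) $ i = (\<Sum>j\<in>UNIV. M i j *\<^sub>R e $ j) \<bullet> b" for b i
    by (simp add: Mop_def z_def inner_sum_left)
  have "(norm (\<chi> i. \<Sum>j\<in>UNIV. M i j *\<^sub>R e $ j))\<^sup>2
      = (\<Sum>b\<in>Basis. (norm (Mop (z b)))\<^sup>2)"
    by (simp add: vec_norm_sq eucl_norm_sq Mop_z sum.swap[of _ UNIV Basis])
  also have "\<dots> \<le> (\<Sum>b\<in>Basis. (lam * norm (z b))\<^sup>2)"
  proof (rule sum_mono)
    fix b :: 'a
    have "norm (Mop (z b)) \<le> lam * norm (z b)"
      unfolding lam_def by (rule onorm[OF bl])
    then show "(norm (Mop (z b)))\<^sup>2 \<le> (lam * norm (z b))\<^sup>2"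
      by (intro power_mono) auto
  qed
  also have "\<dots> = (lam * norm e)\<^sup>2"
    by (simp add: power_mult_distrib sum_distrib_left vec_norm_sq eucl_norm_sq z_def
        sum.swap[of _ UNIV Basis])
  finally show ?thesis
    unfolding Mop_def[symmetric] lam_def[symmetric]
    using lam_nonneg by (meson norm_ge_zero mult_nonneg_nonneg power2_le_imp_le)
qed

lemma mean_agents_mixing_step:
  fixes W :: "'m::finite \<Rightarrow> 'm \<Rightarrow> real" and z w :: "'m \<Rightarrow> 'a::real_vector"
  assumes col: "\<And>j. (\<Sum>i\<in>UNIV. W i j) = 1"
  shows "mean_agents (\<lambda>i. (1 - t) *\<^sub>R (\<Sum>j\<in>UNIV. W i j *\<^sub>R z j) + t *\<^sub>R w i)
       = (1 - t) *\<^sub>R mean_agents z + t *\<^sub>R mean_agents w"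
proof -
  have "(\<Sum>i\<in>UNIV. \<Sum>j\<in>UNIV. W i j *\<^sub>R z j) = (\<Sum>j\<in>UNIV. (\<Sum>i\<in>UNIV. W i j) *\<^sub>R z j)"
    by (subst sum.swap) (simp only: scaleR_sum_left)
  then have "(\<Sum>i\<in>UNIV. \<Sum>j\<in>UNIV. W i j *\<^sub>R z j) = (\<Sum>j\<in>UNIV. z j)"
    by (simp add: col)
  then show ?thesis
    unfolding mean_agents_def
    by (simp only: sum.distrib scaleR_sum_right[symmetric] scaleR_add_right scaleR_scaleR
        mult.commute)
qed

lemma mixing_sub_mean_eq:
  fixes W :: "'m::finite \<Rightarrow> 'm \<Rightarrow> real" and z :: "'m \<Rightarrow> 'a::real_vector"
  assumes row: "(\<Sum>j\<in>UNIV. W i j) = 1"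
  shows "(\<Sum>j\<in>UNIV. W i j *\<^sub>R z j) - mean_agents z
       = (\<Sum>j\<in>UNIV. (W i j - 1 / real CARD('m)) *\<^sub>R (z j - mean_agents z))"
proof -
  have weights_sum_zero: "(\<Sum>j\<in>UNIV. W i j - 1 / real CARD('m)) = 0"
    using row by (simp add: sum_subtractf)
  have "(\<Sum>j\<in>UNIV. (W i j - 1 / real CARD('m)) *\<^sub>R (z j - mean_agents z))
      = (\<Sum>j\<in>UNIV. (W i j - 1 / real CARD('m)) *\<^sub>R z j)
        - (\<Sum>j\<in>UNIV. W i j - 1 / real CARD('m)) *\<^sub>R mean_agents z"
    by (simp add: scaleR_diff_right sum_subtractf flip: scaleR_sum_left)
  also have "\<dots> = (\<Sum>j\<in>UNIV. W i j *\<^sub>R z j) - mean_agents z"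
    unfolding weights_sum_zero
    by (simp add: scaleR_diff_left sum_subtractf mean_agents_def scaleR_sum_right)
  finally show ?thesis by (rule sym)
qed

lemma norm_mean_agents_le:
  fixes z :: "'m::finite \<Rightarrow> 'a::real_normed_vector"
  assumes "\<And>i. norm (z i) \<le> R"
  shows "norm (mean_agents z) \<le> R"
proof -
  have "norm (\<Sum>i\<in>UNIV. z i) \<le> (\<Sum>i\<in>UNIV. norm (z i))" by (rule norm_sum)
  also have "\<dots> \<le> real CARD('m) * R"
    using sum_mono[of UNIV "\<lambda>i. norm (z i)" "\<lambda>_. R"] assms by simp
  finally show ?thesis unfolding mean_agents_def by (simp add: field_simps)
qed

lemma norm_consensus_error_le:
  fixes z :: "'m::finite \<Rightarrow> 'a::real_normed_vector"
  assumes "\<And>i. norm (z i) \<le> R"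
  shows "norm (consensus_error z) \<le> real CARD('m) * (2 * R)"
proof -
  have "norm (consensus_error z) \<le> (\<Sum>i\<in>UNIV. norm (z i - mean_agents z))"
    using norm_vec_le_sum_norm[of "consensus_error z"] by (simp add: consensus_error_def)
  also have "\<dots> \<le> (\<Sum>i\<in>(UNIV::'m set). 2 * R)"
  proof (rule sum_mono)
    fix i
    have "norm (z i - mean_agents z) \<le> norm (z i) + norm (mean_agents z)"
      by (rule norm_triangle_ineq4)
    then show "norm (z i - mean_agents z) \<le> 2 * R"
      using assms[of i] norm_mean_agents_le[of z R, OF assms] by simp
  qed
  finally show ?thesis by simp
qed

lemma consensus_error_mixing_step:
  fixes W :: "'m::finite \<Rightarrow> 'm \<Rightarrow> real" and z w :: "'m \<Rightarrow> 'a::real_vector"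
  assumes row: "\<And>i. (\<Sum>j\<in>UNIV. W i j) = 1" and col: "\<And>j. (\<Sum>i\<in>UNIV. W i j) = 1"
  shows "consensus_error (\<lambda>i. (1 - t) *\<^sub>R (\<Sum>j\<in>UNIV. W i j *\<^sub>R z j) + t *\<^sub>R w i)
    = (1 - t) *\<^sub>R (\<chi> i. \<Sum>j\<in>UNIV. (W i j - 1 / real CARD('m)) *\<^sub>R consensus_error z $ j)
      + t *\<^sub>R consensus_error w"
proof -
  have "(1 - t) *\<^sub>R (\<Sum>j\<in>UNIV. W i j *\<^sub>R z j) + t *\<^sub>R w i
        - ((1 - t) *\<^sub>R mean_agents z + t *\<^sub>R mean_agents w)
      = (1 - t) *\<^sub>R (\<Sum>j\<in>UNIV. (W i j - 1 / real CARD('m)) *\<^sub>R (z j - mean_agents z))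
        + t *\<^sub>R (w i - mean_agents w)" for i
  proof -
    have "(1 - t) *\<^sub>R (\<Sum>j\<in>UNIV. W i j *\<^sub>R z j) + t *\<^sub>R w i
          - ((1 - t) *\<^sub>R mean_agents z + t *\<^sub>R mean_agents w)
        = (1 - t) *\<^sub>R ((\<Sum>j\<in>UNIV. W i j *\<^sub>R z j) - mean_agents z)
          + t *\<^sub>R (w i - mean_agents w)"
      by (simp add: algebra_simps)
    then show ?thesis using mixing_sub_mean_eq[of W i z] row by simp
  qed
  then show ?thesis
    unfolding consensus_error_def mean_agents_mixing_step[OF col] by (simp add: vec_eq_iff)
qed

lemma norm_consensus_error_mixing_step_le:
  fixes W :: "'m::finite \<Rightarrow> 'm \<Rightarrow> real" and z w :: "'m \<Rightarrow> 'a::euclidean_space"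
  assumes row: "\<And>i. (\<Sum>j\<in>UNIV. W i j) = 1" and col: "\<And>j. (\<Sum>i\<in>UNIV. W i j) = 1"
    and t: "0 \<le> t" "t \<le> 1" and w_bounded: "\<And>i. norm (w i) \<le> R"
  shows "norm (consensus_error (\<lambda>i. (1 - t) *\<^sub>R (\<Sum>j\<in>UNIV. W i j *\<^sub>R z j) + t *\<^sub>R w i))
    \<le> onorm (\<lambda>y::real ^ 'm. \<chi> i. \<Sum>j\<in>UNIV. (W i j - 1 / real CARD('m)) * y $ j)
        * norm (consensus_error z)
      + t * (real CARD('m) * (2 * R))"
proof -
  let ?lam = "onorm (\<lambda>y::real ^ 'm. \<chi> i. \<Sum>j\<in>UNIV. (W i j - 1 / real CARD('m)) * y $ j)"
  let ?mix = "\<chi> i. \<Sum>j\<in>UNIV. (W i j - 1 / real CARD('m)) *\<^sub>R consensus_error z $ j"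
  have "(1 - t) * norm ?mix \<le> norm ?mix"
    using t by (simp add: mult_left_le_one_le)
  also have "\<dots> \<le> ?lam * norm (consensus_error z)"
    by (rule norm_blockwise_matrix_action_le)
  finally have "(1 - t) * norm ?mix \<le> ?lam * norm (consensus_error z)" .
  moreover have "t * norm (consensus_error w) \<le> t * (real CARD('m) * (2 * R))"
    using norm_consensus_error_le[OF w_bounded] t(1) by (rule mult_left_mono)
  moreover have "norm ((1 - t) *\<^sub>R ?mix + t *\<^sub>R consensus_error w)
      \<le> (1 - t) * norm ?mix + t * norm (consensus_error w)"
    using norm_triangle_ineq[of "(1 - t) *\<^sub>R ?mix" "t *\<^sub>R consensus_error w"] t by simp
  ultimately show ?thesis
    unfolding consensus_error_mixing_step[OF row col] by linarith
qed

lemma powr_Suc_le: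
  assumes "k \<ge> 1" "0 \<le> \<alpha>" "\<alpha> \<le> 1"
  shows "real (Suc k) powr \<alpha> \<le> real k powr \<alpha> * ((real k + 1) / real k)"
proof -
  have k_pos: "real k > 0" using assms(1) by simp
  have "real (Suc k) powr \<alpha> = real k powr \<alpha> * ((real k + 1) / real k) powr \<alpha>"
    using k_pos by (simp add: powr_divide add.commute)
  also have "\<dots> \<le> real k powr \<alpha> * ((real k + 1) / real k)"
    using powr_mono[OF assms(3), of "(real k + 1) / real k"] k_pos
    by (intro mult_left_mono) simp_all
  finally show ?thesis .
qed

lemma bigo_powr_of_contracting_recursion:
  fixes a :: "nat \<Rightarrow> real"
  assumes a_nonneg: "\<And>k. 0 \<le> a k" and lam: "0 \<le> lam" "lam < 1" and B: "0 \<le> B" and A: "0 < A"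
    and \<alpha>: "0 < \<alpha>" "\<alpha> \<le> 1"
    and rec: "\<And>k. k \<ge> 1 \<Longrightarrow> a (Suc k) \<le> lam * a k + B * (A / real k powr \<alpha>)"
  shows "a \<in> O(\<lambda>k. 1 / real k powr \<alpha>)"
proof -
  obtain K :: nat where K: "real K \<ge> 2 / (1 - lam)" "K \<ge> 1"
    by (metis real_arch_simple le_cases of_nat_1 of_nat_mono order_trans)
  define c where "c = max (a K * real K powr \<alpha>) (2 * A * B / (1 - lam))"
  have c_ge: "2 * A * B / (1 - lam) \<le> c" by (simp add: c_def)
  then have AB: "A * B \<le> c * (1 - lam) / 2" using lam by (simp add: field_simps)
  have c_nonneg: "0 \<le> c" using c_ge A B lam by (smt (verit) divide_nonneg_pos mult_nonneg_nonneg)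
  have bound: "a k * real k powr \<alpha> \<le> c" if "k \<ge> K" for k
    using that
  proof (induction k rule: dec_induct)
    case base
    then show ?case by (simp add: c_def)
  next
    case (step k)
    have k1: "k \<ge> 1" using step K by simp
    have k_pos: "real k > 0" using k1 by simp
    have pk: "real k powr \<alpha> > 0" using k_pos by simp
    have ak: "a k \<le> c / real k powr \<alpha>" using step.IH pk by (simp add: field_simps)
    have "a (Suc k) \<le> lam * a k + B * (A / real k powr \<alpha>)" using rec k1 by blast
    also have "\<dots> \<le> (lam * c + A * B) / real k powr \<alpha>"
      using mult_left_mono[OF ak lam(1)] by (simp add: add_divide_distrib mult.commute)
    also have "\<dots> \<le> (c * (1 + lam) / 2) / real k powr \<alpha>"
      using AB pk by (intro divide_right_mono) (auto simp: field_simps)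
    finally have next_le: "a (Suc k) \<le> (c * (1 + lam) / 2) / real k powr \<alpha>" .
    have "real k \<ge> 2 / (1 - lam)"
      using K step by (meson of_nat_le_iff order_trans)
    then have "2 \<le> real k * (1 - lam)"
      using lam by (simp add: field_simps)
    then have ratio: "(1 + lam) * (real k + 1) \<le> 2 * real k"
      using lam by (simp add: algebra_simps)
    have "a (Suc k) * real (Suc k) powr \<alpha>
        \<le> (c * (1 + lam) / 2) / real k powr \<alpha> * (real k powr \<alpha> * ((real k + 1) / real k))"
      using next_le powr_Suc_le[OF k1 less_imp_le[OF \<alpha>(1)] \<alpha>(2)] a_nonneg[of "Suc k"]
      by (meson mult_mono powr_ge_zero order_trans)
    also have "\<dots> = c * ((1 + lam) * (real k + 1)) / (2 * real k)"
      using pk k_pos by (simp add: field_simps)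
    also have "\<dots> \<le> c"
      using ratio c_nonneg k_pos mult_left_mono[OF ratio c_nonneg]
      by (simp add: divide_le_eq)
    finally show ?case .
  qed
  show ?thesis
  proof (rule bigoI[where c = c])
    show "\<forall>\<^sub>F k in at_top. norm (a k) \<le> c * norm (1 / real k powr \<alpha>)"
      unfolding eventually_at_top_linorder
    proof (intro exI allI impI)
      fix k assume "k \<ge> K"
      moreover have "real k powr \<alpha> > 0" using \<open>k \<ge> K\<close> K by simp
      ultimately show "norm (a k) \<le> c * norm (1 / real k powr \<alpha>)"
        using bound a_nonneg[of k] by (simp add: pos_le_divide_eq)
    qed
  qed
qed

theorem theorem1:
  fixes \<Omega> :: "'a::euclidean_space set"
    and E :: "'m::finite \<Rightarrow> 'm \<Rightarrow> bool" and W :: "'m \<Rightarrow> 'm \<Rightarrow> real"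
    and n :: "'m \<Rightarrow> nat"
    and f :: "'m \<Rightarrow> nat \<Rightarrow> 'a \<Rightarrow> real" and gradf :: "'m \<Rightarrow> nat \<Rightarrow> 'a \<Rightarrow> 'a"
    and U :: "'a set" and L G C A \<alpha> :: real and q :: nat
    and \<gamma> :: "nat \<Rightarrow> real" and S :: "nat \<Rightarrow> 'm \<Rightarrow> nat set"
    and x u d v g :: "nat \<Rightarrow> 'm \<Rightarrow> 'a"
  assumes Omega: "\<Omega> \<noteq> {}" "convex \<Omega>" "compact \<Omega>"
    and n_pos: "\<And>i. n i \<ge> 1"
    and U: "open U" "\<Omega> \<subseteq> U"
    and diff: "\<And>i j x. j < n i \<Longrightarrow> x \<in> U \<Longrightarrow>
                 (f i j has_derivative (\<lambda>h. gradf i j x \<bullet> h)) (at x)"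
    and smooth: "\<And>i j. j < n i \<Longrightarrow> L-lipschitz_on U (gradf i j)"
    and lip: "\<And>i. G-lipschitz_on \<Omega> (local_fun (n i) (f i))"
    and bdd: "\<And>i x. x \<in> \<Omega> \<Longrightarrow> norm (local_grad (n i) (gradf i) x) \<le> C"
    and W: "mixing_matrix E W"
    and q: "q > 0"
    and alpha: "0 < \<alpha>" "\<alpha> \<le> 1" and A: "A > 0"
    and step: "\<And>k. k \<ge> 1 \<Longrightarrow> \<gamma> k = A / real k powr \<alpha>"
    and step_range: "\<And>k. k \<ge> 1 \<Longrightarrow> 0 < \<gamma> k \<and> \<gamma> k \<le> 1"
    and run: "dstofw_run W \<Omega> n gradf \<gamma> q S x u d v g"
  shows "\<forall>i. (\<lambda>k. norm (x k i - mean_agents (x k))) \<in> O(\<lambda>k. 1 / real k powr \<alpha>)"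
proof
  fix i
  let ?lam = "onorm (\<lambda>y::real ^ 'm. \<chi> i. \<Sum>j\<in>UNIV. (W i j - 1 / real CARD('m)) * y $ j)"
  have row: "\<And>i. (\<Sum>j\<in>UNIV. W i j) = 1" and col: "\<And>j. (\<Sum>i\<in>UNIV. W i j) = 1"
    and lam: "?lam < 1"
    using W unfolding mixing_matrix_def by blast+
  obtain R where R: "\<And>y. y \<in> \<Omega> \<Longrightarrow> norm y \<le> R"
    using compact_imp_bounded[OF Omega(3)] unfolding bounded_iff by blast
  have "R \<ge> 0" using Omega(1) R by (meson ex_in_conv norm_ge_zero order_trans)
  have iteration: "u k i \<in> \<Omega> \<and>
      x (Suc k) i = (1 - \<gamma> k) *\<^sub>R (\<Sum>j\<in>UNIV. W i j *\<^sub>R x k j) + \<gamma> k *\<^sub>R u k i"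
    if "k \<ge> 1" for k i
    using run that unfolding dstofw_run_def by simp
  have "norm (consensus_error (x (Suc k)))
      \<le> ?lam * norm (consensus_error (x k)) + real CARD('m) * (2 * R) * (A / real k powr \<alpha>)"
    if "k \<ge> 1" for k
  proof -
    have x_next: "x (Suc k)
        = (\<lambda>i. (1 - \<gamma> k) *\<^sub>R (\<Sum>j\<in>UNIV. W i j *\<^sub>R x k j) + \<gamma> k *\<^sub>R u k i)"
      using iteration[OF that] by auto
    have "norm (u k i) \<le> R" for i
      using iteration[OF that] R by blast
    then have "norm (consensus_error (x (Suc k)))
        \<le> ?lam * norm (consensus_error (x k)) + \<gamma> k * (real CARD('m) * (2 * R))"
      unfolding x_next using step_range[OF that]
      by (intro norm_consensus_error_mixing_step_le[OF row col]) auto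
    then show ?thesis
      unfolding step[OF that] by (simp only: mult.commute)
  qed
  then have "(\<lambda>k. norm (consensus_error (x k))) \<in> O(\<lambda>k. 1 / real k powr \<alpha>)"
    using \<open>R \<ge> 0\<close>
    by (intro bigo_powr_of_contracting_recursion[where B = "real CARD('m) * (2 * R)",
          OF _ onorm_pos_le lam _ A alpha]) (auto intro: bounded_linear_matrix_action)
  moreover have "(\<lambda>k. norm (x k i - mean_agents (x k))) \<in> O(\<lambda>k. norm (consensus_error (x k)))"
    using Finite_Cartesian_Product.norm_nth_le[of "consensus_error (x _)" i]
    by (intro landau_o.big_mono always_eventually allI) (simp add: consensus_error_def)
  ultimately show "(\<lambda>k. norm (x k i - mean_agents (x k))) \<in> O(\<lambda>k. 1 / real k powr \<alpha>)"
    using landau_o.big_trans by blast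
qed

end
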